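(* Let $\mathcal{S}$ be a subspace of $\mathbb{C}^n$. Then $$\sup_{D\in\mathcal{D}^+_n}\|P_{D,\mathcal{S}}\|=\max\{\|P_{Q,\mathcal{S}}\|:Q\in\mathcal{P}(\mathcal{D}_n),\ R(Q)\veebar\mathcal{S}\}.$$
   Context: $\mathcal{D}_n$ is the algebra of $n\times n$ diagonal complex matrices, $\mathcal{D}^+_n$ its positive definite elements, $\mathcal{P}(\mathcal{D}_n)$ its orthogonal projections. Norms are operator norms for the Euclidean norm. For a positive semidefinite matrix $D$ and a subspace $\mathcal{S}$, write $D=\begin{pmatrix} a & b\\ b^* & c\end{pmatrix}$ with respect to $\mathcal{S}\oplus\mathcal{S}^\perp$ and set $P_{D,\mathcal{S}}:=\begin{pmatrix} 1 & a^\dagger b\\ 0&0\end{pmatrix}$ ($a^\dagger$ Moore–Penrose inverse). Two subspaces satisfy $\mathcal{T}\veebar\mathcal{S}$ if $\mathcal{T}^\perp\cap\mathcal{S}=\mathcal{T}\cap\mathcal{S}^\perp=\{0\}$. *)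

theory Defs
  imports "HOL-Analysis.Analysis"
begin

text \<open>The norm on complex ^'n is the Euclidean norm, and the matrix norm is the induced
  operator norm (onorm of the associated map).\<close>

definition cinner :: "complex ^'n \<Rightarrow> complex ^'n \<Rightarrow> complex" where
  "cinner x y = (\<Sum>i\<in>UNIV. x $ i * cnj (y $ i))"

definition adjoint_mat :: "complex ^'n ^'n \<Rightarrow> complex ^'n ^'n" where
  "adjoint_mat A = (\<chi> i j. cnj (A $ j $ i))"

definition csubspace :: "(complex ^'n) set \<Rightarrow> bool" where
  "csubspace S \<longleftrightarrow> 0 \<in> S \<and> (\<forall>x\<in>S. \<forall>y\<in>S. x + y \<in> S) \<and> (\<forall>c. \<forall>x\<in>S. c *s x \<in> S)"

definition corth :: "(complex ^'n) set \<Rightarrow> (complex ^'n) set" where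
  "corth S = {x. \<forall>y\<in>S. cinner x y = 0}"

definition mat_range :: "complex ^'n ^'n \<Rightarrow> (complex ^'n) set" where
  "mat_range A = range (\<lambda>x. A *v x)"

definition hermitian :: "complex ^'n ^'n \<Rightarrow> bool" where
  "hermitian A \<longleftrightarrow> adjoint_mat A = A"

definition is_orth_proj :: "complex ^'n ^'n \<Rightarrow> bool" where
  "is_orth_proj P \<longleftrightarrow> P ** P = P \<and> hermitian P"

definition orth_proj_onto :: "(complex ^'n) set \<Rightarrow> complex ^'n ^'n" where
  "orth_proj_onto S = (THE P. is_orth_proj P \<and> mat_range P = S)"

definition moore_penrose :: "complex ^'n ^'n \<Rightarrow> complex ^'n ^'n" where
  "moore_penrose A = (THE X. A ** X ** A = A \<and> X ** A ** X = X
      \<and> hermitian (A ** X) \<and> hermitian (X ** A))"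

definition is_diagonal :: "complex ^'n ^'n \<Rightarrow> bool" where
  "is_diagonal A \<longleftrightarrow> (\<forall>i j. i \<noteq> j \<longrightarrow> A $ i $ j = 0)"

definition pos_def :: "complex ^'n ^'n \<Rightarrow> bool" where
  "pos_def A \<longleftrightarrow> hermitian A \<and> (\<forall>x. x \<noteq> 0 \<longrightarrow> 0 < Re (cinner (A *v x) x))"

definition diag_pos :: "(complex ^'n ^'n) set" where
  "diag_pos = {D. is_diagonal D \<and> pos_def D}"

definition diag_proj :: "(complex ^'n ^'n) set" where
  "diag_proj = {Q. is_diagonal Q \<and> is_orth_proj Q}"

text \<open>P_{D,S}: with respect to S \<oplus> S^\<perp>, D = [[a,b],[b*,c]] and P_{D,S} = [[1, a^\<dagger> b],[0,0]].
  Written as an n x n matrix with E the orthogonal projection onto S: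
  a corresponds to E D E (a \<oplus> 0), b to E D (I - E), so that
  P_{D,S} = E + (E D E)^\<dagger> (E D (I - E)); note (E D E)^\<dagger> = a^\<dagger> \<oplus> 0.\<close>
definition oblique_proj :: "complex ^'n ^'n \<Rightarrow> (complex ^'n) set \<Rightarrow> complex ^'n ^'n" where
  "oblique_proj D S = (let E = orth_proj_onto S in
      E + moore_penrose (E ** D ** E) ** (E ** D ** (mat 1 - E)))"

definition opnorm :: "complex ^'n ^'n \<Rightarrow> real" where
  "opnorm A = onorm (\<lambda>x. A *v x)"

definition compl_pos :: "(complex ^'n) set \<Rightarrow> (complex ^'n) set \<Rightarrow> bool" where
  "compl_pos T S \<longleftrightarrow> corth T \<inter> S = {0} \<and> T \<inter> corth S = {0}"

end

theory Submission
  imports Defs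
begin

text \<open>For a positive diagonal \<open>D = diag d\<close>, \<open>P(D,S) x\<close> is the best approximation of \<open>x\<close> in
  \<open>S\<close> for the weighted norm \<open>\<Sum>i. d i * \<bar>v i\<bar>\<^sup>2\<close>. Switching on the weight of one coordinate
  \<open>j\<close> moves the solution along a segment whose far end solves a problem on the hyperplane section
  \<open>S \<inter> {y. y j = 0}\<close>, with one weight fewer. By induction, every weighted solution is a convex
  combination of solutions of interpolation problems \<open>z \<in> S, z i = x i for i \<in> J\<close>, over index
  sets \<open>J\<close> on which restriction is a bijection from \<open>S\<close> onto \<open>\<complex>\<^sup>J\<close>. These \<open>J\<close> are exactly
  those with \<open>R(Q) \<veebar> S\<close> for the diagonal projection \<open>Q\<close> onto the coordinates in \<open>J\<close>, and the
  interpolant is \<open>P(Q,S) x\<close>; hence \<open>\<parallel>P(D,S)\<parallel> \<le> max \<parallel>P(Q,S)\<parallel>\<close>. Conversely, giving the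
  coordinates outside \<open>J\<close> the weight \<open>\<epsilon> \<rightarrow> 0\<close> drives \<open>P(D,S) x\<close> to \<open>P(Q,S) x\<close>, so the
  maximum is also the supremum.\<close>

section \<open>The complex inner product\<close>

lemma cinner_add_left: "cinner (x + y) z = cinner x z + cinner y z"
  by (simp add: cinner_def distrib_right sum.distrib)

lemma cinner_diff_left: "cinner (x - y) z = cinner x z - cinner y z"
  by (simp add: cinner_def left_diff_distrib sum_subtractf)

lemma cinner_diff_right: "cinner x (y - z) = cinner x y - cinner x z"
  by (simp add: cinner_def right_diff_distrib sum_subtractf)

lemma cinner_scale_left: "cinner (c *s x) z = c * cinner x z"
  by (simp add: cinner_def sum_distrib_left mult.assoc)

lemma cinner_scale_right: "cinner x (c *s z) = cnj c * cinner x z"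
  by (simp add: cinner_def sum_distrib_left algebra_simps)

lemma cinner_zero_left [simp]: "cinner 0 x = 0"
  by (simp add: cinner_def)

lemma cnj_cinner: "cnj (cinner x y) = cinner y x"
  by (simp add: cinner_def mult.commute)

lemma Re_cinner: "Re (cinner x y) = inner x y"
  by (simp add: cinner_def inner_vec_def inner_complex_def Re_sum)

lemma norm_vec_square: "(norm (x :: complex ^'n))\<^sup>2 = (\<Sum>i\<in>UNIV. (cmod (x $ i))\<^sup>2)"
  unfolding norm_vec_def L2_set_def by (simp add: sum_nonneg)

lemma cinner_self: "cinner x x = of_real ((norm x)\<^sup>2)"
proof -
  have "cinner x x = (\<Sum>i\<in>UNIV. of_real ((cmod (x $ i))\<^sup>2))"
    unfolding cinner_def by (intro sum.cong refl) (rule complex_norm_square[symmetric])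
  then show ?thesis
    by (simp add: norm_vec_square)
qed

lemma cinner_self_eq_0: "cinner x x = 0 \<longleftrightarrow> x = 0"
  by (simp add: cinner_self)

lemma cinner_axis_right: "cinner x (axis i 1) = x $ i"
  by (simp add: cinner_def axis_def if_distrib cong: if_cong)

lemma cinner_axis_left: "cinner (axis i 1) x = cnj (x $ i)"
  by (metis cinner_axis_right cnj_cinner)

lemma cvec_eq_iff_cinner_left: "u = v \<longleftrightarrow> (\<forall>x. cinner x u = cinner x v)"
  by (metis cinner_axis_left complex_cnj_cancel_iff vec_eq_iff)

lemma cinner_adjoint: "cinner (A *v x) y = cinner x (adjoint_mat A *v y)"
proof -
  have "cinner (A *v x) y = (\<Sum>i\<in>UNIV. \<Sum>j\<in>UNIV. A $ i $ j * x $ j * cnj (y $ i))"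
    by (simp add: cinner_def matrix_vector_mult_def sum_distrib_right)
  also have "\<dots> = (\<Sum>j\<in>UNIV. \<Sum>i\<in>UNIV. A $ i $ j * x $ j * cnj (y $ i))"
    by (rule sum.swap)
  also have "\<dots> = cinner x (adjoint_mat A *v y)"
    by (simp add: cinner_def adjoint_mat_def matrix_vector_mult_def sum_distrib_left mult_ac)
  finally show ?thesis .
qed

lemma cinner_hermitian: "hermitian A \<Longrightarrow> cinner (A *v x) y = cinner x (A *v y)"
  by (simp add: hermitian_def cinner_adjoint)

lemma adjoint_mult: "adjoint_mat (A ** B) = adjoint_mat B ** adjoint_mat A"
  by (simp add: adjoint_mat_def matrix_matrix_mult_def vec_eq_iff mult.commute)

lemma mat_eqI: "(\<And>x. A *v x = B *v x) \<Longrightarrow> A = B"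
  using matrix_eq by blast

lemma matrix_diff_ldistrib: "A ** (B - C) = A ** B - A ** (C :: complex ^'n ^'n)"
  by (simp add: matrix_matrix_mult_def vec_eq_iff right_diff_distrib sum_subtractf)

lemma matrix_diff_rdistrib: "(A - B) ** C = A ** C - B ** (C :: complex ^'n ^'n)"
  by (simp add: matrix_matrix_mult_def vec_eq_iff left_diff_distrib sum_subtractf)

lemma matrix_add_rdistrib: "(A + B) ** C = A ** C + B ** C"
  by (simp add: matrix_matrix_mult_def vec_eq_iff distrib_right sum.distrib)

section \<open>Complex subspaces and orthogonal projections\<close>

lemma csubspace_zero: "csubspace S \<Longrightarrow> 0 \<in> S"
  by (simp add: csubspace_def)

lemma csubspace_add: "csubspace S \<Longrightarrow> x \<in> S \<Longrightarrow> y \<in> S \<Longrightarrow> x + y \<in> S"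
  by (simp add: csubspace_def)

lemma csubspace_scale: "csubspace S \<Longrightarrow> x \<in> S \<Longrightarrow> c *s x \<in> S"
  by (simp add: csubspace_def)

lemma scaleR_cvec: "r *\<^sub>R (x :: complex ^'n) = of_real r *s x"
  by (simp add: scaleR_vec_def vector_scalar_mult_def scaleR_conv_of_real)

lemma csubspace_scaleR: "csubspace S \<Longrightarrow> x \<in> S \<Longrightarrow> r *\<^sub>R x \<in> S"
  by (simp add: csubspace_scale scaleR_cvec)

lemma csubspace_diff: "csubspace S \<Longrightarrow> x \<in> S \<Longrightarrow> y \<in> S \<Longrightarrow> x - y \<in> S"
  using csubspace_add[of S x "(-1) *s y"] csubspace_scale[of S y "-1"] by simp

lemma csubspace_subspace: "csubspace S \<Longrightarrow> subspace S"
  unfolding subspace_def using csubspace_zero csubspace_add csubspace_scaleR by blast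

lemma csubspace_orth_decomp:
  assumes "csubspace S"
  shows "\<exists>y\<in>S. \<forall>s\<in>S. cinner (x - y) s = 0"
proof -
  have span: "span S = S"
    using csubspace_subspace[OF assms] by simp
  obtain y z where yz: "y \<in> span S" "\<And>w. w \<in> span S \<Longrightarrow> orthogonal z w" "x = y + z"
    using orthogonal_subspace_decomp_exists[of S x] by blast
  have "cinner z s = 0" if "s \<in> S" for s
  proof -
    \<comment> \<open>Real orthogonality to s and to i s kills the real and the imaginary part.\<close>
    have "\<i> *s s \<in> S"
      using assms that by (rule csubspace_scale)
    then have "Re (cinner z s) = 0" "Re (cinner z (\<i> *s s)) = 0"
      using yz(2) that span by (simp_all add: Re_cinner orthogonal_def)
    then show ?thesis
      by (simp add: cinner_scale_right complex_eq_iff)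
  qed
  then show ?thesis
    using yz span by (intro bexI[of _ y]) auto
qed

lemma csubspace_orth_decomp_unique:
  assumes "csubspace S" "y1 \<in> S" "\<forall>s\<in>S. cinner (x - y1) s = 0"
    "y2 \<in> S" "\<forall>s\<in>S. cinner (x - y2) s = 0"
  shows "y1 = y2"
proof -
  have "y1 - y2 \<in> S"
    using assms by (simp add: csubspace_diff)
  have "cinner (y1 - y2) (y1 - y2) = cinner (x - y2) (y1 - y2) - cinner (x - y1) (y1 - y2)"
    by (simp add: cinner_diff_left)
  also have "\<dots> = 0"
    using assms(3,5) \<open>y1 - y2 \<in> S\<close> by simp
  finally show ?thesis
    by (simp add: cinner_self_eq_0)
qed

lemma csubspace_mat_range: "csubspace (mat_range A)"
  unfolding csubspace_def mat_range_def
proof (intro conjI ballI allI)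
  show "0 \<in> range ((*v) A)"
    using range_eqI[of 0 "(*v) A" 0] by simp
  fix u v c
  assume "u \<in> range ((*v) A)" "v \<in> range ((*v) A)"
  then obtain x y where "u = A *v x" "v = A *v y"
    by blast
  then show "u + v \<in> range ((*v) A)" "c *s u \<in> range ((*v) A)"
    by (metis matrix_vector_right_distrib rangeI, metis vector_scalar_commute rangeI)
qed

lemma orth_proj_fixes_range: "is_orth_proj P \<Longrightarrow> y \<in> mat_range P \<Longrightarrow> P *v y = y"
  by (auto simp: is_orth_proj_def mat_range_def matrix_vector_mul_assoc)

lemma orth_proj_orth:
  assumes "is_orth_proj P" "s \<in> mat_range P"
  shows "cinner (x - P *v x) s = 0"
proof -
  have "cinner (x - P *v x) s = cinner (x - P *v x) (P *v s)"
    using orth_proj_fixes_range[OF assms] by simp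
  also have "\<dots> = cinner (P *v (x - P *v x)) s"
    using assms(1) by (simp add: is_orth_proj_def cinner_hermitian)
  also have "\<dots> = cinner (P *v x - P *v (P *v x)) s"
    by (simp add: matrix_vector_mult_diff_distrib)
  also have "\<dots> = 0"
    using assms(1) by (simp add: is_orth_proj_def matrix_vector_mul_assoc)
  finally show ?thesis .
qed

lemma orth_proj_unique:
  assumes "is_orth_proj P" "is_orth_proj P'" "mat_range P = mat_range P'"
  shows "P = P'"
proof (rule mat_eqI)
  fix x
  have "P *v x \<in> mat_range P" "P' *v x \<in> mat_range P"
    using assms(3) by (auto simp: mat_range_def)
  moreover have "\<forall>s\<in>mat_range P. cinner (x - P *v x) s = 0"
    using orth_proj_orth[OF assms(1)] by blast
  moreover have "\<forall>s\<in>mat_range P. cinner (x - P' *v x) s = 0"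
    using orth_proj_orth[OF assms(2)] assms(3) by blast
  ultimately show "P *v x = P' *v x"
    by (intro csubspace_orth_decomp_unique[OF csubspace_mat_range]) auto
qed

lemma csubspace_orth_proj_map:
  assumes S: "csubspace S"
  obtains p where "Vector_Spaces.linear (*s) (*s) p" and "\<And>x. p x \<in> S"
    and "\<And>y. y \<in> S \<Longrightarrow> p y = y" and "\<And>x y. cinner (p x) y = cinner x (p y)"
proof -
  obtain p where p_in: "\<And>x. p x \<in> S" and p_orth: "\<And>x s. s \<in> S \<Longrightarrow> cinner (x - p x) s = 0"
    using csubspace_orth_decomp[OF S] by metis
  have p_eqI: "p x = y" if "y \<in> S" "\<forall>s\<in>S. cinner (x - y) s = 0" for x y
    using csubspace_orth_decomp_unique[OF S p_in _ that] p_orth by blast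
  have p_fix: "p y = y" if "y \<in> S" for y
    by (rule p_eqI[OF that]) simp
  have p_add: "p (x + y) = p x + p y" for x y
  proof (rule p_eqI)
    show "p x + p y \<in> S"
      by (intro csubspace_add[OF S] p_in)
    show "\<forall>s\<in>S. cinner (x + y - (p x + p y)) s = 0"
      by (simp add: add_diff_add cinner_add_left p_orth)
  qed
  have p_scale: "p (c *s x) = c *s p x" for c x
  proof (rule p_eqI)
    show "c *s p x \<in> S"
      by (intro csubspace_scale[OF S] p_in)
    show "\<forall>s\<in>S. cinner (c *s x - c *s p x) s = 0"
      by (simp add: cinner_scale_left p_orth flip: vector_ssub_ldistrib)
  qed
  have lin: "Vector_Spaces.linear (*s) (*s) p"
    by unfold_locales (simp_all add: p_add p_scale)
  have sym: "cinner (p x) y = cinner x (p y)" for x y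
  proof -
    have "cinner (p x) (y - p y) = 0"
      using p_orth[OF p_in, of y] by (metis cnj_cinner complex_cnj_zero)
    moreover have "cinner (x - p x) (p y) = 0"
      using p_orth p_in by blast
    ultimately show ?thesis
      by (simp add: cinner_diff_left cinner_diff_right)
  qed
  show ?thesis
    using that[OF lin p_in p_fix sym] .
qed

lemma orth_proj_exists:
  assumes S: "csubspace S"
  shows "\<exists>P. is_orth_proj P \<and> mat_range P = S"
proof -
  obtain p where lin: "Vector_Spaces.linear (*s) (*s) p" and p_in: "\<And>x. p x \<in> S"
    and p_fix: "\<And>y. y \<in> S \<Longrightarrow> p y = y" and sym: "\<And>x y. cinner (p x) y = cinner x (p y)"
    using csubspace_orth_proj_map[OF S] by blast
  define P where "P = matrix p"
  have P_apply: "P *v x = p x" for x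
    unfolding P_def using matrix_works[OF lin] .
  have "is_orth_proj P"
    unfolding is_orth_proj_def hermitian_def
  proof
    show "P ** P = P"
      by (rule mat_eqI) (simp add: matrix_vector_mul_assoc[symmetric] P_apply p_fix p_in)
    show "adjoint_mat P = P"
      by (rule mat_eqI) (simp add: cvec_eq_iff_cinner_left cinner_adjoint[symmetric] P_apply sym)
  qed
  moreover have "mat_range P = S"
    unfolding mat_range_def P_apply using p_in p_fix by (metis image_subset_iff range_subsetD subsetI
      subset_antisym rangeI)
  ultimately show ?thesis
    by blast
qed

lemma orth_proj_onto:
  assumes "csubspace S"
  shows "is_orth_proj (orth_proj_onto S)" "mat_range (orth_proj_onto S) = S"
proof -
  have "\<exists>!P. is_orth_proj P \<and> mat_range P = S"
    using orth_proj_exists[OF assms] orth_proj_unique by blast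
  then have "is_orth_proj (orth_proj_onto S) \<and> mat_range (orth_proj_onto S) = S"
    unfolding orth_proj_onto_def by (rule theI')
  then show "is_orth_proj (orth_proj_onto S)" "mat_range (orth_proj_onto S) = S"
    by auto
qed

section \<open>Moore--Penrose inverses of compressions\<close>

lemma moore_penrose_unique:
  fixes A X Y :: "complex ^'n ^'n"
  assumes X1: "A ** X ** A = A" and X2: "X ** A ** X = X"
    and X3: "hermitian (A ** X)" and X4: "hermitian (X ** A)"
    and Y1: "A ** Y ** A = A" and Y2: "Y ** A ** Y = Y"
    and Y3: "hermitian (A ** Y)" and Y4: "hermitian (Y ** A)"
  shows "X = Y"
proof -
  let ?A = "adjoint_mat A" and ?X = "adjoint_mat X" and ?Y = "adjoint_mat Y"
  have XA': "?X ** ?A = A ** X" and AX': "?A ** ?X = X ** A"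
    using X3 X4 by (simp_all add: hermitian_def adjoint_mult)
  have YA': "?Y ** ?A = A ** Y" and AY': "?A ** ?Y = Y ** A"
    using Y3 Y4 by (simp_all add: hermitian_def adjoint_mult)
  have AYA': "?A ** ?Y ** ?A = ?A" and AXA': "?A ** ?X ** ?A = ?A"
    using arg_cong[OF Y1, of adjoint_mat] arg_cong[OF X1, of adjoint_mat]
    by (simp_all add: adjoint_mult matrix_mul_assoc)
  have "X = X ** (?X ** ?A)"
    using X2 by (simp add: XA' matrix_mul_assoc)
  also have "\<dots> = X ** (?X ** (?A ** ?Y ** ?A))"
    by (simp only: AYA')
  also have "\<dots> = X ** ((?X ** ?A) ** (?Y ** ?A))"
    by (simp add: matrix_mul_assoc)
  also have "\<dots> = (X ** A ** X) ** A ** Y"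
    by (simp add: XA' YA' matrix_mul_assoc)
  finally have X_eq: "X = X ** A ** Y"
    by (simp add: X2)
  have "Y = (?A ** ?Y) ** Y"
    using Y2 by (simp add: AY' matrix_mul_assoc)
  also have "\<dots> = ((?A ** ?X ** ?A) ** ?Y) ** Y"
    by (simp only: AXA')
  also have "\<dots> = ((?A ** ?X) ** (?A ** ?Y)) ** Y"
    by (simp add: matrix_mul_assoc)
  also have "\<dots> = X ** A ** (Y ** A ** Y)"
    by (simp add: AX' AY' matrix_mul_assoc)
  finally show ?thesis
    using X_eq by (simp add: Y2)
qed

lemma moore_penrose_eqI:
  assumes "A ** X ** A = A" "X ** A ** X = X" "hermitian (A ** X)" "hermitian (X ** A)"
  shows "moore_penrose A = X"
  unfolding moore_penrose_def
  using assms moore_penrose_unique[of A _ X] by (intro the_equality) blast+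

text \<open>The pseudo-inverse of an operator \<open>A\<close> living on \<open>R(E)\<close> is read off from the inverse of
  \<open>A \<oplus> 1\<close> on \<open>R(E) \<oplus> R(E)\<^sup>\<perp>\<close>.\<close>
lemma moore_penrose_compression:
  fixes E A N :: "complex ^'n ^'n"
  assumes E: "E ** E = E" "hermitian E" and A: "E ** A = A" "A ** E = A"
    and N: "N ** (A + (mat 1 - E)) = mat 1"
  shows "E ** N = N ** E" and "A ** (N ** E) = E" and "N ** E ** A = E"
    and "moore_penrose A = N ** E"
proof -
  define M where "M = A + (mat 1 - E)"
  have NM: "N ** M = mat 1" and MN: "M ** N = mat 1"
    using N matrix_left_right_inverse by (auto simp: M_def)
  have EM: "E ** M = A" and ME: "M ** E = A"
    using E A by (simp_all add: M_def matrix_add_ldistrib matrix_add_rdistrib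
        matrix_diff_ldistrib matrix_diff_rdistrib)
  have "E ** N = (N ** M) ** E ** N"
    by (simp add: NM)
  also have "\<dots> = N ** (M ** E) ** N"
    by (simp add: matrix_mul_assoc)
  also have "\<dots> = N ** (E ** M) ** N"
    by (simp only: ME EM)
  also have "\<dots> = N ** E"
    by (simp add: MN flip: matrix_mul_assoc)
  finally show comm: "E ** N = N ** E" .
  have "A ** (N ** E) = E ** (M ** N) ** E"
    by (simp add: EM[symmetric] matrix_mul_assoc)
  then show AX: "A ** (N ** E) = E"
    by (simp add: MN E(1))
  have "N ** E ** A = N ** (M ** E)"
    by (simp add: A(1) ME flip: matrix_mul_assoc)
  then show XA: "N ** E ** A = E"
    by (simp add: NM matrix_mul_assoc)
  show "moore_penrose A = N ** E"
  proof (rule moore_penrose_eqI)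
    show "A ** (N ** E) ** A = A"
      by (simp add: AX A(1))
    have "N ** E ** A ** (N ** E) = E ** N ** E"
      by (simp add: XA matrix_mul_assoc)
    then show "N ** E ** A ** (N ** E) = N ** E"
      by (metis comm E(1) matrix_mul_assoc)
    show "hermitian (A ** (N ** E))" "hermitian (N ** E ** A)"
      by (simp_all add: AX XA E(2))
  qed
qed

section \<open>Weighted least squares\<close>

definition real_diag :: "('n \<Rightarrow> real) \<Rightarrow> complex ^'n ^'n" where
  "real_diag d = (\<chi> i j. if i = j then of_real (d i) else 0)"

definition winner :: "('n \<Rightarrow> real) \<Rightarrow> complex ^'n \<Rightarrow> complex ^'n \<Rightarrow> complex" where
  "winner d v s = (\<Sum>i\<in>UNIV. of_real (d i) * v $ i * cnj (s $ i))"

text \<open>\<open>y\<close> minimises \<open>\<Sum>i. d i * \<bar>y i - x i\<bar>\<^sup>2\<close> over \<open>S\<close>, expressed by its normal equations.\<close>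
definition wls_sol :: "(complex ^'n) set \<Rightarrow> ('n \<Rightarrow> real) \<Rightarrow> complex ^'n \<Rightarrow> complex ^'n \<Rightarrow> bool" where
  "wls_sol S d x y \<longleftrightarrow> y \<in> S \<and> (\<forall>s\<in>S. winner d (y - x) s = 0)"

definition definite_on :: "(complex ^'n) set \<Rightarrow> ('n \<Rightarrow> real) \<Rightarrow> bool" where
  "definite_on S d \<longleftrightarrow> (\<forall>y\<in>S. (\<forall>i. d i \<noteq> 0 \<longrightarrow> y $ i = 0) \<longrightarrow> y = 0)"

lemma real_diag_mult_vec: "real_diag d *v v = (\<chi> i. of_real (d i) * v $ i)"
proof -
  have "(\<Sum>j\<in>UNIV. (if i = j then of_real (d i) else 0) * v $ j)
      = (\<Sum>j\<in>UNIV. if i = j then of_real (d i) * v $ j else 0)" for i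
    by (rule sum.cong) auto
  then show ?thesis
    by (simp add: real_diag_def matrix_vector_mult_def vec_eq_iff)
qed

lemma cinner_real_diag: "cinner (real_diag d *v v) s = winner d v s"
  by (simp add: real_diag_mult_vec cinner_def winner_def)

lemma winner_add_left: "winner d (v + w) s = winner d v s + winner d w s"
  by (simp add: winner_def algebra_simps sum.distrib)

lemma winner_diff_left: "winner d (v - w) s = winner d v s - winner d w s"
  by (simp add: winner_def algebra_simps sum_subtractf)

lemma winner_scaleR_left: "winner d (c *\<^sub>R v) s = of_real c * winner d v s"
  by (simp add: winner_def sum_distrib_left scaleR_cvec vector_scalar_mult_def mult_ac)

lemma winner_add_right: "winner d v (s + s') = winner d v s + winner d v s'"
  by (simp add: winner_def algebra_simps sum.distrib)

lemma winner_scale_right: "winner d v (c *s s) = cnj c * winner d v s"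
  by (simp add: winner_def sum_distrib_left mult_ac)

lemma winner_self: "winner d v v = of_real (\<Sum>i\<in>UNIV. d i * (cmod (v $ i))\<^sup>2)"
proof -
  have summand: "of_real (d i) * v $ i * cnj (v $ i) = of_real (d i * (cmod (v $ i))\<^sup>2)" for i
    using complex_norm_square[of "v $ i"] by (simp add: mult.assoc)
  show ?thesis
    unfolding winner_def of_real_sum by (intro sum.cong refl summand)
qed

lemma winner_self_eq_0:
  assumes "\<forall>i. d i \<ge> 0" "winner d v v = 0" "d i \<noteq> 0"
  shows "v $ i = 0"
proof -
  have "of_real (\<Sum>i\<in>UNIV. d i * (cmod (v $ i))\<^sup>2) = (0 :: complex)"
    using assms(2) by (simp only: winner_self)
  then have "(\<Sum>i\<in>UNIV. d i * (cmod (v $ i))\<^sup>2) = 0"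
    by (simp only: of_real_eq_0_iff)
  then have "d i * (cmod (v $ i))\<^sup>2 = 0"
    using assms(1) by (simp add: sum_nonneg_eq_0_iff)
  then show ?thesis
    using assms(3) by simp
qed

lemma wls_sol_unique:
  assumes S: "csubspace S" and d: "\<forall>i. d i \<ge> 0" "definite_on S d"
    and y: "wls_sol S d x y" "wls_sol S d x y'"
  shows "y = y'"
proof -
  have diff_in: "y - y' \<in> S"
    using y by (auto simp: wls_sol_def intro: csubspace_diff[OF S])
  have "winner d ((y - x) - (y' - x)) (y - y') = 0"
    using y diff_in by (simp add: wls_sol_def winner_diff_left)
  then have "winner d (y - y') (y - y') = 0"
    by simp
  then have "\<forall>i. d i \<noteq> 0 \<longrightarrow> (y - y') $ i = 0"
    using winner_self_eq_0[OF d(1)] by blast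
  then have "y - y' = 0"
    using d(2) diff_in unfolding definite_on_def by blast
  then show ?thesis
    by simp
qed

lemma weighted_compression_invertible:
  assumes S: "csubspace S" and d: "\<forall>i. d i \<ge> 0" "definite_on S d"
  defines "E \<equiv> orth_proj_onto S"
  shows "\<exists>N. N ** (E ** real_diag d ** E + (mat 1 - E)) = mat 1"
proof -
  have EE: "E ** E = E" and herm: "hermitian E" and range: "mat_range E = S"
    using orth_proj_onto[OF S] by (simp_all add: E_def is_orth_proj_def)
  have "v = 0" if v: "(E ** real_diag d ** E + (mat 1 - E)) *v v = 0" for v
  proof -
    \<comment> \<open>Applying \<open>E\<close> and \<open>1 - E\<close> separates the equation into its two components.\<close>
    have "E *v ((E ** real_diag d ** E + (mat 1 - E)) *v v) = E *v (real_diag d *v (E *v v))"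
      by (simp add: matrix_vector_mul_assoc matrix_add_ldistrib matrix_diff_ldistrib
          matrix_mul_assoc EE)
    then have EDEv: "E *v (real_diag d *v (E *v v)) = 0"
      using v by simp
    have "(mat 1 - E) *v ((E ** real_diag d ** E + (mat 1 - E)) *v v) = v - E *v v"
      by (simp add: matrix_vector_mul_assoc matrix_add_ldistrib matrix_diff_ldistrib
          matrix_diff_rdistrib EE matrix_mul_assoc matrix_vector_mult_diff_rdistrib)
    then have Ev: "E *v v = v"
      using v by simp
    have "winner d v v = cinner (E *v (real_diag d *v v)) v"
      using Ev cinner_hermitian[OF herm, of "real_diag d *v v" v] by (simp add: cinner_real_diag)
    then have "winner d v v = 0"
      using EDEv Ev by simp
    moreover have "v \<in> S"
      using Ev range by (metis mat_range_def rangeI)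
    ultimately show "v = 0"
      using d winner_self_eq_0[OF d(1)] by (auto simp: definite_on_def)
  qed
  then show ?thesis
    using matrix_left_invertible_ker by blast
qed

lemma oblique_proj_real_diag_normal_equations:
  assumes S: "csubspace S" and d: "\<forall>i. d i \<ge> 0" "definite_on S d"
  defines "E \<equiv> orth_proj_onto S" and "P \<equiv> oblique_proj (real_diag d) S"
  shows "E ** P = P" and "E ** real_diag d ** P = E ** real_diag d"
proof -
  define D where "D = real_diag d"
  define A where "A = E ** D ** E"
  have EE: "E ** E = E" and herm: "hermitian E"
    using orth_proj_onto[OF S] by (simp_all add: E_def is_orth_proj_def)
  obtain N where N: "N ** (A + (mat 1 - E)) = mat 1"
    using weighted_compression_invertible[OF S d] by (auto simp: A_def D_def E_def)
  have EA: "E ** A = A"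
    by (simp add: A_def EE matrix_mul_assoc)
  have AE: "A ** E = A"
    by (simp add: A_def EE flip: matrix_mul_assoc)
  note compression = moore_penrose_compression[OF EE herm EA AE N]
  have NEE: "N ** E ** E = N ** E"
    by (simp add: EE flip: matrix_mul_assoc)
  have "P = E + N ** E ** (E ** D ** (mat 1 - E))"
    using compression(4) by (simp add: P_def oblique_proj_def Let_def D_def A_def flip: E_def)
  also have "\<dots> = E + N ** E ** D - N ** E ** A"
    by (simp add: A_def matrix_diff_ldistrib matrix_mul_assoc NEE)
  also have "\<dots> = N ** E ** D"
    by (simp add: compression(3))
  finally have P_eq: "P = N ** E ** D" .
  show EP: "E ** P = P"
    by (simp add: P_eq matrix_mul_assoc compression(1) NEE)
  have "E ** D ** P = A ** (N ** E) ** D"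
    by (metis A_def EP P_eq matrix_mul_assoc)
  then show "E ** real_diag d ** P = E ** real_diag d"
    by (simp add: compression(2) D_def)
qed

lemma oblique_proj_real_diag_wls:
  assumes S: "csubspace S" and d: "\<forall>i. d i \<ge> 0" "definite_on S d"
  shows "wls_sol S d x (oblique_proj (real_diag d) S *v x)"
proof -
  define E where "E = orth_proj_onto S"
  define P where "P = oblique_proj (real_diag d) S"
  have herm: "hermitian E" and range: "mat_range E = S"
    using orth_proj_onto[OF S] by (simp_all add: E_def is_orth_proj_def)
  have EP: "E ** P = P" and EDP: "E ** real_diag d ** P = E ** real_diag d"
    using oblique_proj_real_diag_normal_equations[OF S d] by (simp_all add: E_def P_def)
  have "P *v x \<in> S"
    using range EP by (metis mat_range_def matrix_vector_mul_assoc rangeI)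
  moreover have "winner d (P *v x - x) s = 0" if "s \<in> S" for s
  proof -
    have "E *v s = s"
      using orth_proj_fixes_range[OF orth_proj_onto(1)[OF S], of s] that range by (simp add: E_def)
    then have "winner d (P *v x - x) s = cinner (E *v (real_diag d *v (P *v x - x))) s"
      using cinner_hermitian[OF herm] by (metis cinner_real_diag)
    also have "E *v (real_diag d *v (P *v x - x))
        = (E ** real_diag d ** P) *v x - (E ** real_diag d) *v x"
      by (simp add: matrix_vector_mult_diff_distrib matrix_vector_mul_assoc matrix_mul_assoc)
    finally show ?thesis
      using EDP by simp
  qed
  ultimately show ?thesis
    by (simp add: wls_sol_def P_def)
qed

lemma oblique_proj_real_diag_apply:
  assumes "csubspace S" "\<forall>i. d i \<ge> 0" "definite_on S d" "wls_sol S d x y"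
  shows "oblique_proj (real_diag d) S *v x = y"
  using assms oblique_proj_real_diag_wls wls_sol_unique by blast

section \<open>Basic index sets\<close>

text \<open>Restriction to the coordinates in \<open>J\<close> is a bijection from \<open>S\<close> onto \<open>\<complex>\<^sup>J\<close>.\<close>
definition basic_set :: "(complex ^'n) set \<Rightarrow> 'n set \<Rightarrow> bool" where
  "basic_set S J \<longleftrightarrow> (\<forall>y\<in>S. (\<forall>i\<in>J. y $ i = 0) \<longrightarrow> y = 0)
      \<and> (\<forall>w. (\<forall>i. i \<notin> J \<longrightarrow> w $ i = 0) \<and> (\<forall>s\<in>S. cinner w s = 0) \<longrightarrow> w = 0)"

definition basic_solutions :: "(complex ^'n) set \<Rightarrow> complex ^'n \<Rightarrow> (complex ^'n) set" where
  "basic_solutions S x = {z. \<exists>J. basic_set S J \<and> wls_sol S (indicator J) x z}"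

lemma definite_on_indicator: "basic_set S J \<Longrightarrow> definite_on S (indicator J)"
  unfolding basic_set_def definite_on_def by (auto simp: indicator_def)

lemma definite_on_pos: "\<forall>i. d i > 0 \<Longrightarrow> definite_on S d"
  unfolding definite_on_def by (simp add: vec_eq_iff less_imp_neq[symmetric])

lemma winner_indicator: "winner (indicator J) v s = cinner (\<chi> i. if i \<in> J then v $ i else 0) s"
  unfolding winner_def cinner_def by (intro sum.cong) (auto simp: indicator_def)

lemma wls_sol_indicatorI: "z \<in> S \<Longrightarrow> \<forall>i\<in>J. z $ i = x $ i \<Longrightarrow> wls_sol S (indicator J) x z"
  unfolding wls_sol_def winner_def by (auto simp: indicator_def intro!: sum.neutral)

lemma basic_wls_sol_interpolates:
  assumes J: "basic_set S J" and z: "wls_sol S (indicator J) x z" and "i \<in> J"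
  shows "z $ i = x $ i"
proof -
  define w where "w = (\<chi> i. if i \<in> J then (z - x) $ i else 0)"
  have "\<forall>s\<in>S. cinner w s = 0"
    using z by (simp add: wls_sol_def winner_indicator w_def)
  then have "w = 0"
    using J by (auto simp: basic_set_def w_def)
  then show ?thesis
    using \<open>i \<in> J\<close> by (simp add: w_def vec_eq_iff split: if_splits)
qed

section \<open>Reduction to basic index sets\<close>

lemma winner_fun_upd:
  assumes "d j = 0"
  shows "winner (d(j := t)) v s = winner d v s + of_real t * v $ j * cnj (s $ j)"
proof -
  have "winner (d(j := t)) v s
      = (\<Sum>i\<in>UNIV. of_real (d i) * v $ i * cnj (s $ i)
          + (if i = j then of_real t * v $ j * cnj (s $ j) else 0))"
    unfolding winner_def using assms by (intro sum.cong) auto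
  then show ?thesis
    by (simp add: sum.distrib winner_def)
qed

lemma winner_hyperplane:
  assumes S: "csubspace S" and s0: "s0 \<in> S" "s0 $ j = 1" and s: "s \<in> S"
    and orth: "\<forall>s'\<in>{y \<in> S. y $ j = 0}. winner d v s' = 0"
  shows "winner d v s = cnj (s $ j) * winner d v s0"
proof -
  have "s - s $ j *s s0 \<in> {y \<in> S. y $ j = 0}"
    using s0 s by (simp add: csubspace_diff[OF S] csubspace_scale[OF S])
  then have "winner d v (s - s $ j *s s0) = 0"
    using orth by blast
  moreover have "s = s $ j *s s0 + (s - s $ j *s s0)"
    by simp
  ultimately show ?thesis
    by (metis add_cancel_right_right winner_add_right winner_scale_right)
qed

lemma basic_set_insert:
  fixes S :: "(complex ^'n) set"
  assumes S: "csubspace S" and s0: "s0 \<in> S" "s0 $ j = 1"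
    and J: "basic_set {y \<in> S. y $ j = 0} J"
  shows "basic_set S (insert j J)"
  unfolding basic_set_def
proof (intro conjI allI impI ballI)
  fix y
  assume "y \<in> S" "\<forall>i\<in>insert j J. y $ i = 0"
  then show "y = 0"
    using J by (auto simp: basic_set_def)
next
  fix w :: "complex ^'n"
  assume w: "(\<forall>i. i \<notin> insert j J \<longrightarrow> w $ i = 0) \<and> (\<forall>s\<in>S. cinner w s = 0)"
  define w' where "w' = w - w $ j *s axis j 1"
  have "\<forall>s\<in>{y \<in> S. y $ j = 0}. cinner w' s = 0"
    using w by (auto simp: w'_def cinner_diff_left cinner_scale_left cinner_axis_left)
  moreover have "\<forall>i. i \<notin> J \<longrightarrow> w' $ i = 0"
    using w by (auto simp: w'_def axis_def)
  ultimately have "w' = 0"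
    using J unfolding basic_set_def by blast
  then have w_eq: "w = w $ j *s axis j 1"
    by (simp add: w'_def)
  have "cinner w s0 = 0"
    using w s0 by blast
  then have "w $ j = 0"
    using s0 by (subst (asm) w_eq) (simp add: cinner_scale_left cinner_axis_left)
  then show "w = 0"
    using w_eq by simp
qed

lemma wls_sol_hyperplane_translate:
  fixes S :: "(complex ^'n) set" and j :: 'n
  defines "S' \<equiv> {y \<in> S. y $ j = 0}"
  assumes S: "csubspace S" and s0: "s0 \<in> S" "s0 $ j = 1"
    and y': "wls_sol S' d (x - x $ j *s s0) y'"
      "y' \<in> convex hull (basic_solutions S' (x - x $ j *s s0))"
  shows "x $ j *s s0 + y' \<in> convex hull (basic_solutions S x)"
    and "x $ j *s s0 + y' \<in> S" and "(x $ j *s s0 + y') $ j = x $ j"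
    and "\<forall>s\<in>S'. winner d (x $ j *s s0 + y' - x) s = 0"
proof -
  have "(\<lambda>z. x $ j *s s0 + z) ` basic_solutions S' (x - x $ j *s s0) \<subseteq> basic_solutions S x"
  proof clarify
    fix z
    assume "z \<in> basic_solutions S' (x - x $ j *s s0)"
    then obtain J where J: "basic_set S' J" and z: "wls_sol S' (indicator J) (x - x $ j *s s0) z"
      by (auto simp: basic_solutions_def)
    have "z \<in> S" "z $ j = 0"
      using z by (auto simp: wls_sol_def S'_def)
    moreover have "z $ i = x $ i - x $ j * s0 $ i" if "i \<in> J" for i
      using basic_wls_sol_interpolates[OF J z that] by simp
    ultimately have "wls_sol S (indicator (insert j J)) x (x $ j *s s0 + z)"
      using s0 by (intro wls_sol_indicatorI) (auto intro: csubspace_add[OF S] csubspace_scale[OF S])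
    then show "x $ j *s s0 + z \<in> basic_solutions S x"
      using basic_set_insert[OF S s0 J[unfolded S'_def]] by (auto simp: basic_solutions_def)
  qed
  then have "(\<lambda>z. x $ j *s s0 + z) ` (convex hull (basic_solutions S' (x - x $ j *s s0)))
      \<subseteq> convex hull (basic_solutions S x)"
    unfolding convex_hull_translation[symmetric] by (rule hull_mono)
  then show "x $ j *s s0 + y' \<in> convex hull (basic_solutions S x)"
    using y'(2) by auto
  show "x $ j *s s0 + y' \<in> S" "(x $ j *s s0 + y') $ j = x $ j"
    using y'(1) s0 by (auto simp: wls_sol_def S'_def intro: csubspace_add[OF S] csubspace_scale[OF S])
  have eq: "x $ j *s s0 + y' - x = y' - (x - x $ j *s s0)"
    by (simp add: algebra_simps)
  show "\<forall>s\<in>S'. winner d (x $ j *s s0 + y' - x) s = 0"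
    using y'(1) unfolding eq wls_sol_def by blast
qed

lemma segment_through_zero:
  fixes a \<tau> :: complex
  assumes t: "t > 0" and q: "q \<ge> 0" and a: "cnj \<tau> * a = - of_real q"
  shows "\<exists>\<mu>. 0 \<le> \<mu> \<and> \<mu> \<le> 1 \<and> of_real \<mu> * a + of_real t * \<tau> * (1 - of_real \<mu>) = 0"
proof (cases "\<tau> = 0")
  case True
  then show ?thesis
    by (intro exI[of _ 0]) simp
next
  case False
  define N where "N = (cmod \<tau>)\<^sup>2"
  define \<mu> where "\<mu> = t * N / (q + t * N)"
  have "N > 0"
    using False by (simp add: N_def)
  then have den: "q + t * N > 0"
    using t q by (simp add: add_nonneg_pos)
  have "cnj \<tau> * (of_real \<mu> * a + of_real t * \<tau> * (1 - of_real \<mu>))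
      = of_real \<mu> * (cnj \<tau> * a) + of_real t * (\<tau> * cnj \<tau>) * (1 - of_real \<mu>)"
    by (simp add: algebra_simps)
  also have "\<dots> = of_real (t * N - \<mu> * (q + t * N))"
    using a by (simp add: N_def algebra_simps flip: complex_norm_square)
  also have "t * N - \<mu> * (q + t * N) = 0"
    using den by (simp add: \<mu>_def)
  finally have "of_real \<mu> * a + of_real t * \<tau> * (1 - of_real \<mu>) = 0"
    using False by simp
  moreover have "0 \<le> \<mu>" "\<mu> \<le> 1"
    using den q t \<open>N > 0\<close> by (simp_all add: \<mu>_def)
  ultimately show ?thesis
    by blast
qed

text \<open>Under the weights \<open>d(j := t)\<close>, both \<open>y0\<close> and \<open>y1\<close> solve the normal equations up to a
  multiple of \<open>s \<mapsto> cnj (s $ j)\<close>, and the two multiples have opposite directions.\<close>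
lemma wls_sol_fun_upd_segment:
  assumes S: "csubspace S" and d: "\<forall>i. d i \<ge> 0" "d j = 0" and t: "t > 0"
    and s0: "s0 \<in> S" "s0 $ j = 1"
    and y0: "wls_sol S d x y0"
    and y1: "y1 \<in> S" "y1 $ j = x $ j" "\<forall>s\<in>{y \<in> S. y $ j = 0}. winner d (y1 - x) s = 0"
  shows "\<exists>y\<in>closed_segment y0 y1. wls_sol S (d(j := t)) x y"
proof -
  define \<tau> where "\<tau> = (y0 - x) $ j"
  define u where "u = y1 - y0"
  define a where "a = winner d u s0"
  have y0S: "y0 \<in> S" and y0_orth: "\<forall>s\<in>S. winner d (y0 - x) s = 0"
    using y0 by (auto simp: wls_sol_def)
  have uS: "u \<in> S" and uj: "u $ j = - \<tau>"
    using y0S y1 by (simp_all add: u_def \<tau>_def csubspace_diff[OF S])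
  have "\<forall>s\<in>{y \<in> S. y $ j = 0}. winner d u s = 0"
    using y1(3) y0_orth by (auto simp: u_def winner_diff_left simp flip: diff_diff_eq2)
  then have u_s: "winner d u s = cnj (s $ j) * a" if "s \<in> S" for s
    using winner_hyperplane[OF S s0 that] by (simp add: a_def)
  have "of_real (\<Sum>i\<in>UNIV. d i * (cmod (u $ i))\<^sup>2) = winner d u u"
    by (simp only: winner_self)
  also have "\<dots> = - (cnj \<tau> * a)"
    using u_s[OF uS] uj by simp
  finally have "cnj \<tau> * a = - of_real (\<Sum>i\<in>UNIV. d i * (cmod (u $ i))\<^sup>2)"
    by simp
  moreover have "(\<Sum>i\<in>UNIV. d i * (cmod (u $ i))\<^sup>2) \<ge> 0"
    using d(1) by (simp add: sum_nonneg)
  ultimately obtain \<mu> where \<mu>: "0 \<le> \<mu>" "\<mu> \<le> 1" "of_real \<mu> * a + of_real t * \<tau> * (1 - of_real \<mu>) = 0"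
    using segment_through_zero[OF t] by blast
  define y where "y = y0 + \<mu> *\<^sub>R u"
  have "wls_sol S (d(j := t)) x y"
    unfolding wls_sol_def
  proof (intro conjI ballI)
    show "y \<in> S"
      using y0S uS by (simp add: y_def csubspace_add[OF S] csubspace_scaleR[OF S])
    fix s
    assume "s \<in> S"
    have yx: "y - x = (y0 - x) + \<mu> *\<^sub>R u"
      by (simp add: y_def algebra_simps)
    have "winner d (y - x) s = winner d (y0 - x) s + of_real \<mu> * winner d u s"
      unfolding yx by (simp only: winner_add_left winner_scaleR_left)
    then have "winner (d(j := t)) (y - x) s
        = winner d (y0 - x) s + of_real \<mu> * winner d u s + of_real t * (y - x) $ j * cnj (s $ j)"
      by (simp add: winner_fun_upd[of d j, OF d(2)])
    also have "(y - x) $ j = (y0 - x) $ j + of_real \<mu> * u $ j"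
      by (simp add: y_def scaleR_cvec)
    also have "\<dots> = \<tau> * (1 - of_real \<mu>)"
      unfolding uj \<tau>_def by (simp add: algebra_simps)
    also have "winner d (y0 - x) s + of_real \<mu> * winner d u s = of_real \<mu> * (cnj (s $ j) * a)"
      using y0_orth u_s \<open>s \<in> S\<close> by simp
    also have "of_real \<mu> * (cnj (s $ j) * a) + of_real t * (\<tau> * (1 - of_real \<mu>)) * cnj (s $ j)
        = cnj (s $ j) * (of_real \<mu> * a + of_real t * \<tau> * (1 - of_real \<mu>))"
      by (simp add: algebra_simps)
    finally show "winner (d(j := t)) (y - x) s = 0"
      by (simp only: \<mu>(3) mult_zero_right)
  qed
  moreover have "y = (1 - \<mu>) *\<^sub>R y0 + \<mu> *\<^sub>R y1"
    by (simp add: y_def u_def algebra_simps)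
  then have "y \<in> closed_segment y0 y1"
    using \<mu>(1,2) by (auto simp: closed_segment_def)
  ultimately show ?thesis
    by blast
qed

lemma definite_on_fun_upd_zero:
  assumes "\<forall>y\<in>S. y $ j = 0" "definite_on S d"
  shows "definite_on S (d(j := 0))"
  unfolding definite_on_def
proof (intro ballI impI)
  fix y
  assume "y \<in> S" and y: "\<forall>i. (d(j := 0)) i \<noteq> 0 \<longrightarrow> y $ i = 0"
  have "y $ i = 0" if "d i \<noteq> 0" for i
    using y assms(1) \<open>y \<in> S\<close> that by (cases "i = j") auto
  then show "y = 0"
    using assms(2) \<open>y \<in> S\<close> by (auto simp: definite_on_def)
qed

lemma definite_on_hyperplane:
  "definite_on S d \<Longrightarrow> definite_on {y \<in> S. y $ j = 0} (d(j := 0))"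
  by (auto simp: definite_on_def)

lemma wls_sol_in_convex_hull_fun_upd:
  fixes S :: "(complex ^'n) set" and j :: 'n
  defines "S' \<equiv> {y \<in> S. y $ j = 0}"
  assumes S: "csubspace S" and d: "\<forall>i. d i \<ge> 0" "d j = 0" and t: "t > 0"
    and definite: "definite_on S (d(j := t))" and s1: "s1 \<in> S" "s1 $ j \<noteq> 0"
    and hyp_S': "\<And>x. \<exists>y. wls_sol S' d x y \<and> y \<in> convex hull (basic_solutions S' x)"
    and hyp_S: "definite_on S d \<Longrightarrow> \<exists>y. wls_sol S d x y \<and> y \<in> convex hull (basic_solutions S x)"
  shows "\<exists>y. wls_sol S (d(j := t)) x y \<and> y \<in> convex hull (basic_solutions S x)"
proof -
  have interpolating: "\<exists>y1\<in>convex hull (basic_solutions S x). y1 \<in> S \<and> y1 $ j = x $ j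
      \<and> (\<forall>s\<in>S'. winner d (y1 - x) s = 0)" if s0: "s0 \<in> S" "s0 $ j = 1" for s0
    using hyp_S'[of "x - x $ j *s s0"] wls_sol_hyperplane_translate[OF S s0, of d x]
    unfolding S'_def by blast
  show ?thesis
  proof (cases "definite_on S d")
    case True
    have s0: "(1 / s1 $ j) *s s1 \<in> S" "((1 / s1 $ j) *s s1) $ j = 1"
      using s1 by (simp_all add: csubspace_scale[OF S])
    obtain y0 where y0: "wls_sol S d x y0" "y0 \<in> convex hull (basic_solutions S x)"
      using hyp_S[OF True] by blast
    obtain y1 where y1: "y1 \<in> convex hull (basic_solutions S x)" "y1 \<in> S" "y1 $ j = x $ j"
      "\<forall>s\<in>S'. winner d (y1 - x) s = 0"
      using interpolating[OF s0] by blast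
    obtain y where "y \<in> closed_segment y0 y1" "wls_sol S (d(j := t)) x y"
      using wls_sol_fun_upd_segment[OF S d t s0 y0(1) y1(2,3)] y1(4) by (auto simp: S'_def)
    moreover have "closed_segment y0 y1 \<subseteq> convex hull (basic_solutions S x)"
      using y0(2) y1(1) by (simp add: closed_segment_subset)
    ultimately show ?thesis
      by blast
  next
    case False
    then obtain s2 where s2: "s2 \<in> S" "\<forall>i. d i \<noteq> 0 \<longrightarrow> s2 $ i = 0" "s2 \<noteq> 0"
      by (auto simp: definite_on_def)
    have "s2 $ j \<noteq> 0"
      using s2 definite t by (auto simp: definite_on_def)
    define s0 where "s0 = (1 / s2 $ j) *s s2"
    have s0: "s0 \<in> S" "s0 $ j = 1" and s0_d: "\<forall>i. d i \<noteq> 0 \<longrightarrow> s0 $ i = 0"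
      using s2 \<open>s2 $ j \<noteq> 0\<close> by (simp_all add: s0_def csubspace_scale[OF S])
    obtain y1 where y1: "y1 \<in> convex hull (basic_solutions S x)" "y1 \<in> S" "y1 $ j = x $ j"
      "\<forall>s\<in>S'. winner d (y1 - x) s = 0"
      using interpolating[OF s0] by blast
    \<comment> \<open>Since \<open>s0\<close> is invisible to the weights \<open>d\<close>, the constraint at \<open>j\<close> is the only one left.\<close>
    have "winner d v s0 = 0" for v
      using s0_d by (auto simp: winner_def intro!: sum.neutral)
    then have "winner (d(j := t)) (y1 - x) s = 0" if "s \<in> S" for s
      using winner_hyperplane[OF S s0 that] y1(3,4) by (simp add: winner_fun_upd[of d j, OF d(2)] S'_def)
    then show ?thesis
      using y1 by (auto simp: wls_sol_def)
  qed
qed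

lemma wls_sol_in_convex_hull_basic_solutions:
  fixes S :: "(complex ^'n) set"
  assumes "csubspace S" "\<forall>i. d i \<ge> 0" "definite_on S d"
  shows "\<exists>y. wls_sol S d x y \<and> y \<in> convex hull (basic_solutions S x)"
  using assms
proof (induction "card {i. \<exists>y\<in>S. y $ i \<noteq> 0} + card {i. d i \<noteq> 0}"
    arbitrary: S d x rule: less_induct)
  case less
  note S = less.prems(1) and d = less.prems(2,3)
  show ?case
  proof (cases "\<exists>j. d j \<noteq> 0")
    case False
    then have "\<forall>y\<in>S. y = 0"
      using d(2) by (simp add: definite_on_def)
    then have "basic_set S {}" and "wls_sol S (indicator {}) x 0" and "wls_sol S d x 0"
      using False csubspace_zero[OF S] by (auto simp: basic_set_def wls_sol_def winner_def vec_eq_iff)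
    then show ?thesis
      by (auto simp: basic_solutions_def intro: hull_inc)
  next
    case True
    then obtain j where "d j \<noteq> 0"
      by blast
    define d0 where "d0 = d(j := 0)"
    have d_eq: "d = d0(j := d j)" and d0: "\<forall>i. d0 i \<ge> 0" "d0 j = 0" and t: "d j > 0"
      using d(1) \<open>d j \<noteq> 0\<close> by (auto simp: d0_def order_le_neq_trans)
    have "{i. d0 i \<noteq> 0} \<subset> {i. d i \<noteq> 0}"
      using \<open>d j \<noteq> 0\<close> by (auto simp: d0_def)
    then have fewer_weights: "card {i. d0 i \<noteq> 0} < card {i. d i \<noteq> 0}"
      by (simp add: psubset_card_mono)
    show ?thesis
    proof (cases "\<forall>y\<in>S. y $ j = 0")
      case True
      have "definite_on S d0"
        using definite_on_fun_upd_zero[OF True d(2)] by (simp only: d0_def)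
      then obtain y where "wls_sol S d0 x y" "y \<in> convex hull (basic_solutions S x)"
        using less.hyps[OF _ S d0(1)] fewer_weights by auto
      moreover have "winner d v s = winner d0 v s" if "s \<in> S" for v s
        using True that winner_fun_upd[of d0 j, OF d0(2)] by (subst d_eq) simp
      ultimately show ?thesis
        by (auto simp: wls_sol_def)
    next
      case False
      then obtain s1 where s1: "s1 \<in> S" "s1 $ j \<noteq> 0"
        by blast
      define S' where "S' = {y \<in> S. y $ j = 0}"
      have S': "csubspace S'"
        using S by (auto simp: S'_def csubspace_def)
      have "{i. \<exists>y\<in>S'. y $ i \<noteq> 0} \<subset> {i. \<exists>y\<in>S. y $ i \<noteq> 0}"
        using s1 by (auto simp: S'_def)
      then have "card {i. \<exists>y\<in>S'. y $ i \<noteq> 0} < card {i. \<exists>y\<in>S. y $ i \<noteq> 0}"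
        by (simp add: psubset_card_mono)
      moreover have "definite_on S' d0"
        using definite_on_hyperplane[OF d(2), of j] by (simp only: S'_def d0_def)
      ultimately have "\<exists>y. wls_sol S' d0 x' y \<and> y \<in> convex hull (basic_solutions S' x')" for x'
        using less.hyps[OF _ S' d0(1)] fewer_weights by simp
      moreover have "definite_on S d0 \<Longrightarrow>
          \<exists>y. wls_sol S d0 x y \<and> y \<in> convex hull (basic_solutions S x)"
        using less.hyps[OF _ S d0(1)] fewer_weights by simp
      ultimately show ?thesis
        using wls_sol_in_convex_hull_fun_upd[OF S d0 t _ s1] d(2) d_eq by (simp add: S'_def)
    qed
  qed
qed

section \<open>Diagonal matrices\<close>

lemma diag_pos_iff: "D \<in> diag_pos \<longleftrightarrow> (\<exists>d. (\<forall>i. d i > 0) \<and> D = real_diag d)"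
proof
  assume D: "D \<in> diag_pos"
  then have diag: "is_diagonal D" and pd: "pos_def D"
    by (auto simp: diag_pos_def)
  have "adjoint_mat D $ i $ i = D $ i $ i" for i
    using pd by (simp add: pos_def_def hermitian_def)
  then have real: "Im (D $ i $ i) = 0" for i
    by (simp add: adjoint_mat_def complex_eq_iff)
  have "(D *v axis i 1) $ i = D $ i $ i" for i
    by (simp add: matrix_vector_mult_def axis_def mult.commute[of "D $ _ $ _"] mult_if_delta)
  then have "D $ i $ i = cinner (D *v axis i 1) (axis i 1)" for i
    by (simp add: cinner_axis_right)
  then have pos: "Re (D $ i $ i) > 0" for i
    using pd by (simp add: pos_def_def axis_eq_0_iff)
  have "D = real_diag (\<lambda>i. Re (D $ i $ i))"
    using diag real by (auto simp: real_diag_def vec_eq_iff is_diagonal_def complex_eq_iff)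
  then show "\<exists>d. (\<forall>i. d i > 0) \<and> D = real_diag d"
    using pos by (intro exI[of _ "\<lambda>i. Re (D $ i $ i)"]) simp
next
  assume "\<exists>d. (\<forall>i. d i > 0) \<and> D = real_diag d"
  then obtain d where d: "\<forall>i. d i > 0" and D: "D = real_diag d"
    by blast
  have "0 < Re (cinner (real_diag d *v x) x)" if "x \<noteq> 0" for x
  proof -
    obtain i where "x $ i \<noteq> 0"
      using \<open>x \<noteq> 0\<close> by (metis vec_eq_iff zero_index)
    then have "0 < (\<Sum>k\<in>UNIV. d k * (cmod (x $ k))\<^sup>2)"
      using d by (intro sum_pos2[of _ i]) (auto simp: less_imp_le)
    then show ?thesis
      by (simp add: cinner_real_diag winner_self)
  qed
  moreover have "is_diagonal D" "hermitian D"
    by (simp_all add: D is_diagonal_def hermitian_def adjoint_mat_def real_diag_def vec_eq_iff)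
  ultimately show "D \<in> diag_pos"
    by (simp add: D diag_pos_def pos_def_def)
qed

lemma diag_proj_iff: "Q \<in> diag_proj \<longleftrightarrow> (\<exists>J. Q = real_diag (indicator J))"
proof
  assume "Q \<in> diag_proj"
  then have diag: "is_diagonal Q" and idem: "Q ** Q = Q"
    by (auto simp: diag_proj_def is_orth_proj_def)
  have "Q $ i $ i * Q $ i $ i = Q $ i $ i" for i
  proof -
    have "(Q ** Q) $ i $ i = (\<Sum>k\<in>UNIV. Q $ i $ k * Q $ k $ i)"
      by (simp add: matrix_matrix_mult_def)
    also have "\<dots> = (\<Sum>k\<in>UNIV. if k = i then Q $ i $ i * Q $ i $ i else 0)"
      using diag by (intro sum.cong) (auto simp: is_diagonal_def)
    finally show ?thesis
      using idem by simp
  qed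
  then have "Q $ i $ i = 0 \<or> Q $ i $ i = 1" for i
    by (metis mult_cancel_right1 mult_zero_left)
  then have "Q = real_diag (indicator {i. Q $ i $ i = 1})"
    using diag by (auto simp: real_diag_def vec_eq_iff is_diagonal_def indicator_def)
  then show "\<exists>J. Q = real_diag (indicator J)"
    by blast
next
  assume "\<exists>J. Q = real_diag (indicator J)"
  then obtain J where Q: "Q = real_diag (indicator J)"
    by blast
  have "Q ** Q = Q"
    by (rule mat_eqI)
      (simp add: Q matrix_vector_mul_assoc[symmetric] real_diag_mult_vec vec_eq_iff indicator_def)
  moreover have "is_diagonal Q" "hermitian Q"
    by (simp_all add: Q is_diagonal_def hermitian_def adjoint_mat_def real_diag_def vec_eq_iff)
  ultimately show "Q \<in> diag_proj"
    by (simp add: diag_proj_def is_orth_proj_def)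
qed

lemma mat_range_real_diag_indicator:
  "mat_range (real_diag (indicator J)) = {w :: complex ^'n. \<forall>i. i \<notin> J \<longrightarrow> w $ i = 0}"
  unfolding mat_range_def
proof (intro set_eqI iffI)
  fix w :: "complex ^'n"
  assume "w \<in> {w. \<forall>i. i \<notin> J \<longrightarrow> w $ i = 0}"
  then have "real_diag (indicator J) *v w = w"
    by (auto simp: real_diag_mult_vec indicator_def vec_eq_iff)
  then show "w \<in> range ((*v) (real_diag (indicator J)))"
    by (metis rangeI)
next
  fix w :: "complex ^'n"
  assume "w \<in> range ((*v) (real_diag (indicator J)))"
  then show "w \<in> {w. \<forall>i. i \<notin> J \<longrightarrow> w $ i = 0}"
    by (auto simp: real_diag_mult_vec)
qed

lemma corth_coordinate_subspace:
  "corth {w :: complex ^'n. \<forall>i. i \<notin> J \<longrightarrow> w $ i = 0} = {y. \<forall>i\<in>J. y $ i = 0}"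
proof (intro set_eqI iffI)
  fix y :: "complex ^'n"
  assume "y \<in> corth {w. \<forall>i. i \<notin> J \<longrightarrow> w $ i = 0}"
  then have "cinner y (axis i 1) = 0" if "i \<in> J" for i
    using that by (auto simp: corth_def axis_def)
  then show "y \<in> {y. \<forall>i\<in>J. y $ i = 0}"
    by (simp add: cinner_axis_right)
next
  fix y :: "complex ^'n"
  assume "y \<in> {y. \<forall>i\<in>J. y $ i = 0}"
  then show "y \<in> corth {w. \<forall>i. i \<notin> J \<longrightarrow> w $ i = 0}"
    unfolding corth_def cinner_def by (auto intro!: sum.neutral)
qed

lemma compl_pos_iff_basic_set:
  assumes "csubspace S"
  shows "compl_pos (mat_range (real_diag (indicator J))) S \<longleftrightarrow> basic_set S J"
  unfolding compl_pos_def mat_range_real_diag_indicator corth_coordinate_subspace basic_set_def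
  using csubspace_zero[OF assms] by (auto simp: corth_def)

section \<open>Norms of the oblique projections\<close>

lemma norm_mult_vec_le_opnorm: "norm (A *v x) \<le> opnorm A * norm x"
  unfolding opnorm_def by (rule onorm[OF matrix_vector_mul_bounded_linear])

lemma oblique_proj_basic_apply:
  assumes "csubspace S" "basic_set S J" "wls_sol S (indicator J) x z"
  shows "oblique_proj (real_diag (indicator J)) S *v x = z"
  using assms by (intro oblique_proj_real_diag_apply definite_on_indicator) auto

lemma basic_set_exists:
  assumes "csubspace S"
  shows "\<exists>J. basic_set S J"
proof -
  have one: "definite_on S (\<lambda>_. 1)"
    by (rule definite_on_pos) simp
  obtain y where "y \<in> convex hull (basic_solutions S 0)"
    using wls_sol_in_convex_hull_basic_solutions[OF assms _ one, of 0] by auto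
  then have "basic_solutions S 0 \<noteq> {}"
    by auto
  then show ?thesis
    by (auto simp: basic_solutions_def)
qed

lemma opnorm_oblique_proj_le_basic:
  fixes S :: "(complex ^'n) set"
  assumes S: "csubspace S" and d: "\<forall>i. d i > 0"
    and C: "\<And>J. basic_set S J \<Longrightarrow> opnorm (oblique_proj (real_diag (indicator J)) S) \<le> C"
  shows "opnorm (oblique_proj (real_diag d) S) \<le> C"
  unfolding opnorm_def
proof (rule onorm_le)
  fix x
  have d': "\<forall>i. d i \<ge> 0" "definite_on S d"
    using d by (auto simp: less_imp_le definite_on_pos)
  obtain y where y: "wls_sol S d x y" "y \<in> convex hull (basic_solutions S x)"
    using wls_sol_in_convex_hull_basic_solutions[OF S d'] by blast
  have "basic_solutions S x \<subseteq> cball 0 (C * norm x)"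
  proof
    fix z
    assume "z \<in> basic_solutions S x"
    then obtain J where J: "basic_set S J" "wls_sol S (indicator J) x z"
      by (auto simp: basic_solutions_def)
    have "norm z \<le> opnorm (oblique_proj (real_diag (indicator J)) S) * norm x"
      using norm_mult_vec_le_opnorm[of "oblique_proj (real_diag (indicator J)) S" x]
      unfolding oblique_proj_basic_apply[OF S J] .
    also have "\<dots> \<le> C * norm x"
      using C[OF J(1)] by (simp add: mult_right_mono)
    finally show "z \<in> cball 0 (C * norm x)"
      by simp
  qed
  then have "convex hull (basic_solutions S x) \<subseteq> cball 0 (C * norm x)"
    by (intro hull_minimal convex_cball)
  then have "norm y \<le> C * norm x"
    using y(2) by auto
  then show "norm (oblique_proj (real_diag d) S *v x) \<le> C * norm x"
    using oblique_proj_real_diag_apply[OF S d' y(1)] by simp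
qed

text \<open>Testing the normal equations of \<open>y\<close> against \<open>v = y - z \<in> S\<close> bounds the \<open>J\<close>-part of \<open>v\<close>
  by \<open>\<epsilon> \<parallel>w\<parallel> \<parallel>v\<parallel>\<close>; since \<open>J\<close> is basic, the \<open>J\<close>-part controls all of \<open>v\<close>.\<close>
lemma wls_sol_small_weights:
  fixes S :: "(complex ^'n) set"
  assumes S: "csubspace S" and J: "basic_set S J" and z: "wls_sol S (indicator J) x z"
    and \<epsilon>: "\<epsilon> > 0" and y: "wls_sol S (\<lambda>i. if i \<in> J then 1 else \<epsilon>) x y"
    and K: "\<forall>s\<in>S. norm s \<le> K * norm (\<chi> i. if i \<in> J then s $ i else 0)" "K \<ge> 0"
  shows "norm (y - z) \<le> K\<^sup>2 * \<epsilon> * norm (\<chi> i. if i \<in> J then 0 else (z - x) $ i)"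
proof -
  define d where "d = (\<lambda>i. if i \<in> J then 1 else \<epsilon>)"
  define v where "v = y - z"
  define w :: "complex ^'n" where "w = (\<chi> i. if i \<in> J then 0 else (z - x) $ i)"
  define v\<^sub>J :: "complex ^'n" where "v\<^sub>J = (\<chi> i. if i \<in> J then v $ i else 0)"
  have vS: "v \<in> S"
    using y z by (auto simp: v_def wls_sol_def csubspace_diff[OF S])
  have "winner d v v + winner d (z - x) v = winner d (y - x) v"
    by (simp add: v_def winner_add_left[symmetric])
  also have "\<dots> = 0"
    using y vS by (simp add: wls_sol_def d_def)
  finally have vv: "winner d v v = - winner d (z - x) v"
    by (simp add: eq_neg_iff_add_eq_0)
  have "winner d (z - x) v = of_real \<epsilon> * cinner w v"
    unfolding winner_def cinner_def d_def w_def sum_distrib_left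
    using basic_wls_sol_interpolates[OF J z] by (intro sum.cong) auto
  then have "Re (winner d v v) = - \<epsilon> * inner w v"
    using vv by (simp add: Re_cinner)
  also have "\<dots> \<le> \<epsilon> * (norm w * norm v)"
    using mult_left_mono[OF _ less_imp_le[OF \<epsilon>], of "- inner w v" "norm w * norm v"]
      norm_cauchy_schwarz[of "-w" v] by simp
  finally have Re_vv: "Re (winner d v v) \<le> \<epsilon> * norm w * norm v"
    by simp
  have "(norm v\<^sub>J)\<^sup>2 = (\<Sum>i\<in>UNIV. if i \<in> J then (cmod (v $ i))\<^sup>2 else 0)"
    unfolding norm_vec_square v\<^sub>J_def by (intro sum.cong) auto
  also have "\<dots> \<le> (\<Sum>i\<in>UNIV. d i * (cmod (v $ i))\<^sup>2)"
    using \<epsilon> by (intro sum_mono) (auto simp: d_def)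
  also have "\<dots> = Re (winner d v v)"
    by (simp add: winner_self)
  finally have vJ: "(norm v\<^sub>J)\<^sup>2 \<le> \<epsilon> * norm w * norm v"
    using Re_vv by linarith
  have "norm v \<le> K * norm v\<^sub>J"
    using K(1) vS by (simp add: v\<^sub>J_def)
  then have "(norm v)\<^sup>2 \<le> K\<^sup>2 * (norm v\<^sub>J)\<^sup>2"
    by (metis norm_ge_zero power_mono power_mult_distrib)
  also have "\<dots> \<le> K\<^sup>2 * (\<epsilon> * norm w * norm v)"
    using vJ by (simp add: mult_left_mono)
  finally have "norm v * norm v \<le> (K\<^sup>2 * \<epsilon> * norm w) * norm v"
    by (simp add: power2_eq_square mult_ac)
  then have "norm v \<le> K\<^sup>2 * \<epsilon> * norm w"
    using \<epsilon> K(2) by (cases "norm v = 0") (auto simp: mult_le_cancel_right)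
  then show ?thesis
    by (simp add: v_def w_def)
qed

lemma opnorm_nonneg: "opnorm A \<ge> 0"
  unfolding opnorm_def by (rule onorm_pos_le[OF matrix_vector_mul_bounded_linear])

lemma norm_le_opnorm_basic_restrict:
  assumes S: "csubspace S" and J: "basic_set S J" and "s \<in> S"
  shows "norm s \<le> opnorm (oblique_proj (real_diag (indicator J)) S)
                   * norm (\<chi> i. if i \<in> J then s $ i else 0)"
proof -
  have "oblique_proj (real_diag (indicator J)) S *v (\<chi> i. if i \<in> J then s $ i else 0) = s"
    using \<open>s \<in> S\<close> by (intro oblique_proj_basic_apply[OF S J] wls_sol_indicatorI) auto
  then show ?thesis
    by (metis norm_mult_vec_le_opnorm)
qed

lemma opnorm_basic_le:
  fixes S :: "(complex ^'n) set"
  assumes S: "csubspace S" and J: "basic_set S J"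
    and M: "\<And>d. \<forall>i. d i > 0 \<Longrightarrow> opnorm (oblique_proj (real_diag d) S) \<le> M"
  shows "opnorm (oblique_proj (real_diag (indicator J)) S) \<le> M"
  unfolding opnorm_def
proof (rule onorm_le)
  fix x
  define P\<^sub>J where "P\<^sub>J = oblique_proj (real_diag (indicator J)) S"
  define K where "K = opnorm P\<^sub>J"
  define z where "z = P\<^sub>J *v x"
  define w :: "complex ^'n" where "w = (\<chi> i. if i \<in> J then 0 else (z - x) $ i)"
  have z: "wls_sol S (indicator J) x z"
    unfolding z_def P\<^sub>J_def
    by (rule oblique_proj_real_diag_wls[OF S _ definite_on_indicator[OF J]]) simp
  have K: "\<forall>s\<in>S. norm s \<le> K * norm (\<chi> i. if i \<in> J then s $ i else 0)" "K \<ge> 0"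
    using norm_le_opnorm_basic_restrict[OF S J] opnorm_nonneg by (auto simp: K_def P\<^sub>J_def)
  show "norm (P\<^sub>J *v x) \<le> M * norm x"
    unfolding z_def[symmetric]
  proof (rule field_le_epsilon)
    fix e :: real
    assume "e > 0"
    define \<epsilon> where "\<epsilon> = e / (K\<^sup>2 * norm w + 1)"
    have den: "K\<^sup>2 * norm w + 1 > 0"
      by (simp add: add_nonneg_pos)
    then have \<epsilon>: "\<epsilon> > 0" "K\<^sup>2 * \<epsilon> * norm w \<le> e"
      using \<open>e > 0\<close> by (simp_all add: \<epsilon>_def field_simps)
    define d where "d = (\<lambda>i. if i \<in> J then 1 else \<epsilon>)"
    have d: "\<forall>i. d i > 0"
      using \<epsilon> by (simp add: d_def)
    define y where "y = oblique_proj (real_diag d) S *v x"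
    have "wls_sol S d x y"
      unfolding y_def using d by (intro oblique_proj_real_diag_wls[OF S] definite_on_pos)
        (auto simp: less_imp_le)
    then have "norm (y - z) \<le> K\<^sup>2 * \<epsilon> * norm w"
      unfolding d_def w_def by (rule wls_sol_small_weights[OF S J z \<epsilon>(1) _ K])
    then have "norm (y - z) \<le> e"
      using \<epsilon>(2) by linarith
    moreover have "norm y \<le> opnorm (oblique_proj (real_diag d) S) * norm x"
      unfolding y_def by (rule norm_mult_vec_le_opnorm)
    moreover have "opnorm (oblique_proj (real_diag d) S) * norm x \<le> M * norm x"
      using M[OF d] by (simp add: mult_right_mono)
    ultimately show "norm z \<le> M * norm x + e"
      using norm_triangle_sub[of z y] norm_minus_commute[of z y] by linarith
  qed
qed

lemma basic_set_opnorm_maximiser: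
  assumes "csubspace S"
  obtains J0 where "basic_set S J0"
    and "\<And>J. basic_set S J \<Longrightarrow> opnorm (oblique_proj (real_diag (indicator J)) S)
                              \<le> opnorm (oblique_proj (real_diag (indicator J0)) S)"
proof -
  let ?f = "\<lambda>J. opnorm (oblique_proj (real_diag (indicator J)) S)"
  have fin: "finite {J. basic_set S J}" and "{J. basic_set S J} \<noteq> {}"
    using basic_set_exists[OF assms] by auto
  then obtain J0 where J0: "basic_set S J0" and Max_eq: "Max (?f ` {J. basic_set S J}) = ?f J0"
    by (rule obtains_MAX) simp
  have "?f J \<le> ?f J0" if "basic_set S J" for J
    unfolding Max_eq[symmetric] using fin that by (intro Max_ge) auto
  then show ?thesis
    using that J0 by blast
qed

lemma SUP_opnorm_oblique_proj:
  fixes S :: "(complex ^'n) set"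
  assumes S: "csubspace S" and J0: "basic_set S J0"
    and max: "\<And>J. basic_set S J \<Longrightarrow> opnorm (oblique_proj (real_diag (indicator J)) S)
                                     \<le> opnorm (oblique_proj (real_diag (indicator J0)) S)"
  shows "(SUP D\<in>diag_pos. ereal (opnorm (oblique_proj D S)))
           = ereal (opnorm (oblique_proj (real_diag (indicator J0)) S))"
proof (rule SUP_eqI)
  fix D :: "complex ^'n ^'n"
  assume "D \<in> diag_pos"
  then show "ereal (opnorm (oblique_proj D S)) \<le> ereal (opnorm (oblique_proj (real_diag (indicator J0)) S))"
    using opnorm_oblique_proj_le_basic[OF S _ max] by (auto simp: diag_pos_iff)
next
  fix M :: ereal
  assume M: "\<And>D. D \<in> diag_pos \<Longrightarrow> ereal (opnorm (oblique_proj D S)) \<le> M"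
  have "real_diag (\<lambda>_. 1) \<in> diag_pos"
    unfolding diag_pos_iff by (intro exI[of _ "\<lambda>_. 1"]) simp
  then have "M \<noteq> -\<infinity>"
    using M[of "real_diag (\<lambda>_. 1)"] by auto
  moreover have "opnorm (oblique_proj (real_diag (indicator J0)) S) \<le> r" if "M = ereal r" for r
    using M that by (intro opnorm_basic_le[OF S J0]) (auto simp: diag_pos_iff)
  ultimately show "ereal (opnorm (oblique_proj (real_diag (indicator J0)) S)) \<le> M"
    by (cases M) auto
qed

theorem corollary3p7:
  fixes S :: "(complex ^'n) set"
  assumes "csubspace S"
  shows "\<exists>Q. Q \<in> diag_proj \<and> compl_pos (mat_range Q) S
           \<and> (\<forall>Q'. Q' \<in> diag_proj \<and> compl_pos (mat_range Q') S
                   \<longrightarrow> opnorm (oblique_proj Q' S) \<le> opnorm (oblique_proj Q S))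
           \<and> (SUP D\<in>diag_pos. ereal (opnorm (oblique_proj D S))) = ereal (opnorm (oblique_proj Q S))"
proof -
  obtain J0 where J0: "basic_set S J0"
    and max: "\<And>J. basic_set S J \<Longrightarrow> opnorm (oblique_proj (real_diag (indicator J)) S)
                                     \<le> opnorm (oblique_proj (real_diag (indicator J0)) S)"
    using basic_set_opnorm_maximiser[OF assms] by blast
  show ?thesis
  proof (intro exI conjI allI impI)
    show "real_diag (indicator J0) \<in> diag_proj"
      by (auto simp: diag_proj_iff)
    show "compl_pos (mat_range (real_diag (indicator J0))) S"
      using J0 by (simp add: compl_pos_iff_basic_set[OF assms])
    show "opnorm (oblique_proj Q' S) \<le> opnorm (oblique_proj (real_diag (indicator J0)) S)"
      if "Q' \<in> diag_proj \<and> compl_pos (mat_range Q') S" for Q'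
      using that max by (auto simp: diag_proj_iff compl_pos_iff_basic_set[OF assms])
    show "(SUP D\<in>diag_pos. ereal (opnorm (oblique_proj D S)))
        = ereal (opnorm (oblique_proj (real_diag (indicator J0)) S))"
      by (rule SUP_opnorm_oblique_proj[OF assms J0 max])
  qed
qed

end
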